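(* Let $m,a,b,t\in\mathbb{N}$ with $m\geq 3$, $a\geq 1$, $t\in\{2,\ldots,m-1\}$ and $(t-1)(am+1)<bm+t<t(am+1)$, and let $S=\langle m,\ am+1,\ bm+t\rangle$ (a MANS-semigroup with embedding dimension $3$). Then the type $\mathrm{t}(S)$ equals $1$ if and only if $t$ divides $m$.
   Context: $\mathbb{N}=\{0,1,2,\ldots\}$. $\langle A\rangle$ is the submonoid of $(\mathbb{N},+)$ generated by $A$; a numerical semigroup is a submonoid of $\mathbb{N}$ with finite complement. A pseudo-Frobenius number of $S$ is an $x\in\mathbb{Z}\setminus S$ with $x+s\in S$ for all $s\in S\setminus\{0\}$; $\mathrm{PF}(S)$ is the set of them and $\mathrm{t}(S)=|\mathrm{PF}(S)|$ is the type of $S$. A MANS-semigroup is a numerical semigroup with $w(1)<\cdots<w(\mathrm{m}(S)-1)$, where $\mathrm{m}(S)$ is the least element of $S\setminus\{0\}$ and $w(i)$ the least element of $S$ congruent to $i$ modulo $\mathrm{m}(S)$. *)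

theory Defs
  imports Main
begin

inductive_set gen_monoid :: "nat set \<Rightarrow> nat set" for A :: "nat set" where
  zero: "0 \<in> gen_monoid A"
| add: "x \<in> gen_monoid A \<Longrightarrow> a \<in> A \<Longrightarrow> x + a \<in> gen_monoid A"

definition pseudo_frobenius :: "nat set \<Rightarrow> int set" where
  "pseudo_frobenius S = {x :: int. x \<notin> int ` S \<and> (\<forall>s\<in>S. s \<noteq> 0 \<longrightarrow> x + int s \<in> int ` S)}"

definition semigroup_type :: "nat set \<Rightarrow> nat" where
  "semigroup_type S = card (pseudo_frobenius S)"

end

(* Write w(i) = g(i) m + i for the least element of S congruent to i modulo m. For
   S = <m, am+1, bm+t> one finds g(i) = (i mod t) a + (i div t) b, and g is monotone, which
   is the MANS property. The pseudo-Frobenius numbers are then the w(i) - m for the residues i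
   with g(i + j) < g(i) + g(j) whenever 0 < j and i + j < m. The residue m - 1 always
   qualifies. If t divides m, then g(i) + g(m-1-i) = g(m-1) rules out every other residue;
   if not, the residue t (m div t) - 1 qualifies as well, because b < t a. *)

theory Submission
  imports Defs
begin

lemma gen_monoid_add_mult:
  assumes "x \<in> gen_monoid A" and "c \<in> A"
  shows "x + n * c \<in> gen_monoid A"
proof (induction n)
  case 0
  show ?case using assms(1) by simp
next
  case (Suc n)
  then have "x + n * c + c \<in> gen_monoid A" using assms(2) by (rule gen_monoid.add)
  then show ?case by (simp add: add_ac)
qed

lemma gen_monoid_three_iff:
  "x \<in> gen_monoid {p, q, r} \<longleftrightarrow> (\<exists>k y z. x = k * p + y * q + z * r)"
proof
  assume "x \<in> gen_monoid {p, q, r}"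
  then show "\<exists>k y z. x = k * p + y * q + z * r"
  proof (induction rule: gen_monoid.induct)
    case zero
    show ?case by auto
  next
    case (add x c)
    then obtain k y z where x: "x = k * p + y * q + z * r" by blast
    from add.hyps(2) consider "c = p" | "c = q" | "c = r" by blast
    then show ?case
    proof cases
      case 1
      then show ?thesis using x by (intro exI[of _ "Suc k"] exI[of _ y] exI[of _ z]) simp
    next
      case 2
      then show ?thesis using x by (intro exI[of _ k] exI[of _ "Suc y"] exI[of _ z]) simp
    next
      case 3
      then show ?thesis using x by (intro exI[of _ k] exI[of _ y] exI[of _ "Suc z"]) simp
    qed
  qed
next
  assume "\<exists>k y z. x = k * p + y * q + z * r"
  then obtain k y z where x: "x = k * p + y * q + z * r" by blast
  have "0 + k * p \<in> gen_monoid {p, q, r}"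
    by (rule gen_monoid_add_mult) (auto intro: gen_monoid.zero)
  then have "0 + k * p + y * q \<in> gen_monoid {p, q, r}"
    by (rule gen_monoid_add_mult) auto
  then have "0 + k * p + y * q + z * r \<in> gen_monoid {p, q, r}"
    by (rule gen_monoid_add_mult) auto
  then show "x \<in> gen_monoid {p, q, r}" using x by simp
qed

(* g i is the quotient by m of the Apery element w(i) = g i * m + i, the least element of S
   congruent to i modulo m. *)
locale apery_coordinates =
  fixes S :: "nat set" and m :: nat and g :: "nat \<Rightarrow> nat"
  assumes m_pos: "0 < m"
    and zero_mem: "0 \<in> S"
    and mem_iff: "i < m \<Longrightarrow> c * m + i \<in> S \<longleftrightarrow> g i \<le> c"
begin

definition apery :: "nat \<Rightarrow> nat" where
  "apery i = g i * m + i"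

(* w(i) - m + w(j) \<in> S for every residue j \<noteq> 0; the residue j = 0 imposes nothing. *)
definition pf_residue :: "nat \<Rightarrow> bool" where
  "pf_residue i \<longleftrightarrow> (\<forall>j. 0 < j \<and> j < m \<longrightarrow>
     (if i + j < m then g (i + j) < g i + g j else g (i + j - m) \<le> g i + g j))"

lemma m_mem: "m \<in> S"
proof -
  have "g 0 = 0" using mem_iff[of 0 0] zero_mem m_pos by simp
  then show ?thesis using mem_iff[of 0 1] m_pos by simp
qed

lemma apery_mem: "i < m \<Longrightarrow> apery i \<in> S"
  unfolding apery_def by (simp add: mem_iff)

lemma mem_imp_le_div: "s \<in> S \<Longrightarrow> g (s mod m) \<le> s div m"
  using mem_iff[of "s mod m" "s div m"] m_pos by simp

lemma int_mem_iff:
  assumes "i < m"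
  shows "C * int m + int i \<in> int ` S \<longleftrightarrow> int (g i) \<le> C"
proof (cases "C \<ge> 0")
  case True
  then obtain c where "C = int c" by (metis nonneg_eq_int)
  then show ?thesis using mem_iff[OF assms, of c]
    by (metis (mono_tags) image_iff of_nat_add of_nat_eq_iff of_nat_le_iff of_nat_mult)
next
  case False
  then have "C * int m \<le> - int m" using mult_right_mono[of C "-1" "int m"] by simp
  then have "C * int m + int i < 0" using assms by linarith
  then show ?thesis using False by auto
qed

lemma shifted_apery_add_mem_iff:
  assumes "i < m" and "j < m"
  shows "int (apery i) - int m + int (c * m + j) \<in> int ` S \<longleftrightarrow>
    (if i + j < m then g (i + j) < g i + c else g (i + j - m) \<le> g i + c)"
proof (cases "i + j < m")
  case True
  have "int (apery i) - int m + int (c * m + j) = (int (g i + c) - 1) * int m + int (i + j)"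
    unfolding apery_def by (simp add: algebra_simps)
  then show ?thesis using int_mem_iff[OF True, of "int (g i + c) - 1"] True by (simp del: of_nat_add)
next
  case False
  have "i + j - m < m" using assms by simp
  moreover have eq: "int (apery i) - int m + int (c * m + j) = int (g i + c) * int m + int (i + j - m)"
    using False unfolding apery_def by (simp add: algebra_simps of_nat_diff)
  ultimately show ?thesis unfolding eq using int_mem_iff[of "i + j - m" "int (g i + c)"] False
    by (simp del: of_nat_add)
qed

lemma pseudo_frobenius_subset: "pseudo_frobenius S \<subseteq> (\<lambda>i. int (apery i) - int m) ` {..<m}"
proof
  fix x assume "x \<in> pseudo_frobenius S"
  then have not_mem: "x \<notin> int ` S" and shift_mem: "x + int m \<in> int ` S"
    using m_mem m_pos unfolding pseudo_frobenius_def by auto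
  define C where "C = (x + int m) div int m"
  define i where "i = nat ((x + int m) mod int m)"
  have i: "i < m" unfolding i_def using m_pos by (simp add: nat_less_iff)
  have x: "x + int m = C * int m + int i"
    using div_mult_mod_eq[of "x + int m" "int m"] m_pos unfolding C_def i_def by simp
  have "int (g i) \<le> C" using shift_mem int_mem_iff[OF i] x by simp
  moreover have "\<not> int (g i) \<le> C - 1"
  proof
    assume "int (g i) \<le> C - 1"
    then have "(C - 1) * int m + int i \<in> int ` S" using int_mem_iff[OF i] by simp
    moreover have "(C - 1) * int m + int i = x" using x by (simp add: algebra_simps)
    ultimately show False using not_mem by simp
  qed
  ultimately have "C = int (g i)" by simp
  then have "x = int (apery i) - int m" using x unfolding apery_def by (simp add: algebra_simps)
  then show "x \<in> (\<lambda>i. int (apery i) - int m) ` {..<m}" using i by blast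
qed

lemma apery_minus_m_mem_pseudo_frobenius_iff:
  assumes i: "i < m"
  shows "int (apery i) - int m \<in> pseudo_frobenius S \<longleftrightarrow> pf_residue i"
proof
  assume pf: "int (apery i) - int m \<in> pseudo_frobenius S"
  show "pf_residue i" unfolding pf_residue_def
  proof (intro allI impI)
    fix j assume j: "0 < j \<and> j < m"
    then have "apery j \<in> S" and "apery j \<noteq> 0" using apery_mem unfolding apery_def by auto
    then have "int (apery i) - int m + int (g j * m + j) \<in> int ` S"
      using pf unfolding pseudo_frobenius_def apery_def by blast
    then show "if i + j < m then g (i + j) < g i + g j else g (i + j - m) \<le> g i + g j"
      using shifted_apery_add_mem_iff[OF i] j by simp
  qed
next
  assume residue: "pf_residue i"
  have "int (apery i) - int m = (int (g i) - 1) * int m + int i"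
    unfolding apery_def by (simp add: algebra_simps)
  then have "int (apery i) - int m \<notin> int ` S" using int_mem_iff[OF i] by simp
  moreover have "int (apery i) - int m + int s \<in> int ` S" if s: "s \<in> S" "s \<noteq> 0" for s
  proof -
    have s_eq: "s = s div m * m + s mod m" by simp
    have le: "g (s mod m) \<le> s div m" using mem_imp_le_div[OF s(1)] .
    have "if i + s mod m < m then g (i + s mod m) < g i + s div m
          else g (i + s mod m - m) \<le> g i + s div m"
    proof (cases "s mod m = 0")
      case True
      then have "0 < s div m" using s(2) s_eq by (metis add_0_right mult_0 gr0I)
      then show ?thesis using True i by simp
    next
      case False
      then have "if i + s mod m < m then g (i + s mod m) < g i + g (s mod m)
                 else g (i + s mod m - m) \<le> g i + g (s mod m)"
        using residue m_pos unfolding pf_residue_def by simp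
      then show ?thesis using le by (simp split: if_splits)
    qed
    then show ?thesis using shifted_apery_add_mem_iff[OF i, of "s mod m" "s div m"] m_pos s_eq
      by simp
  qed
  ultimately show "int (apery i) - int m \<in> pseudo_frobenius S"
    unfolding pseudo_frobenius_def by blast
qed

lemma pseudo_frobenius_eq:
  "pseudo_frobenius S = (\<lambda>i. int (apery i) - int m) ` {i. i < m \<and> pf_residue i}"
  using pseudo_frobenius_subset apery_minus_m_mem_pseudo_frobenius_iff by fastforce

lemma inj_on_apery_minus_m: "inj_on (\<lambda>i. int (apery i) - int m) {..<m}"
proof (rule inj_onI)
  fix i j assume "i \<in> {..<m}" "j \<in> {..<m}" "int (apery i) - int m = int (apery j) - int m"
  then have "apery i mod m = apery j mod m" "i < m" "j < m" by auto
  then show "i = j" unfolding apery_def by simp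
qed

lemma semigroup_type_eq: "semigroup_type S = card {i. i < m \<and> pf_residue i}"
  unfolding semigroup_type_def pseudo_frobenius_eq
  by (rule card_image, rule inj_on_subset[OF inj_on_apery_minus_m]) auto

lemma pf_residue_iff_mono:
  assumes mono: "mono_on {..<m} g" and i: "i < m"
  shows "pf_residue i \<longleftrightarrow> (\<forall>j. 0 < j \<longrightarrow> i + j < m \<longrightarrow> g (i + j) < g i + g j)"
proof -
  have "g (i + j - m) \<le> g i + g j" if "j < m" "\<not> i + j < m" for j
  proof -
    have "g (i + j - m) \<le> g j" using mono_onD[OF mono] that i by simp
    then show ?thesis by simp
  qed
  then show ?thesis unfolding pf_residue_def by auto
qed

end

(* Writing i = (i div t) t + i mod t, the element (i mod t)(am+1) + (i div t)(bm+t)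
   equals apery_quot a b t i * m + i. *)
definition apery_quot :: "nat \<Rightarrow> nat \<Rightarrow> nat \<Rightarrow> nat \<Rightarrow> nat" where
  "apery_quot a b t i = i mod t * a + i div t * b"

lemma apery_quot_eq: "e < t \<Longrightarrow> apery_quot a b t (d * t + e) = e * a + d * b"
  unfolding apery_quot_def by simp

lemma mono_apery_quot:
  assumes "(t - 1) * a \<le> b"
  shows "mono (apery_quot a b t)"
proof (rule mono_iff_le_Suc[THEN iffD2], intro allI)
  fix i
  show "apery_quot a b t i \<le> apery_quot a b t (Suc i)"
  proof (cases "Suc (i mod t) = t")
    case True
    then have "Suc i mod t = 0" "Suc i div t = Suc (i div t)" "i mod t = t - 1"
      by (simp_all add: mod_Suc div_Suc)
    then show ?thesis using assms unfolding apery_quot_def by (simp add: algebra_simps)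
  next
    case False
    then have "Suc i mod t = Suc (i mod t)" "Suc i div t = i div t"
      by (simp_all add: mod_Suc div_Suc)
    then show ?thesis unfolding apery_quot_def by simp
  qed
qed

lemma apery_quot_le:
  assumes "0 < t" and "b \<le> t * a"
  shows "apery_quot a b t (y + z * t) \<le> y * a + z * b"
proof -
  have "y div t * b \<le> y div t * (t * a)" using assms(2) by simp
  moreover have "y * a = y mod t * a + y div t * (t * a)"
    by (metis mod_div_mult_eq add.commute mult.assoc mult.commute distrib_right)
  ultimately show ?thesis using assms(1) unfolding apery_quot_def by (simp add: algebra_simps)
qed

lemma gen_monoid_mem_iff_apery_quot:
  assumes "0 < t" and "(t - 1) * a \<le> b" and "b \<le> t * a" and "i < m"
  shows "c * m + i \<in> gen_monoid {m, a * m + 1, b * m + t} \<longleftrightarrow> apery_quot a b t i \<le> c"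
proof
  assume "c * m + i \<in> gen_monoid {m, a * m + 1, b * m + t}"
  then obtain k y z where "c * m + i = k * m + y * (a * m + 1) + z * (b * m + t)"
    unfolding gen_monoid_three_iff by blast
  then have eq: "c * m + i = (k + y * a + z * b) * m + (y + z * t)"
    by (simp add: algebra_simps)
  have "i = (c * m + i) mod m" and "c = (c * m + i) div m" using assms(4) by simp_all
  then have "i = (y + z * t) mod m" and "c = k + y * a + z * b + (y + z * t) div m"
    unfolding eq using assms(4) by simp_all
  moreover have "apery_quot a b t ((y + z * t) mod m) \<le> apery_quot a b t (y + z * t)"
    using mono_apery_quot[OF assms(2)] by (simp add: monoD)
  ultimately show "apery_quot a b t i \<le> c"
    using apery_quot_le[OF assms(1,3), of y z] by simp
next
  assume le: "apery_quot a b t i \<le> c"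
  have "i mod t * (a * m + 1) + i div t * (b * m + t)
        = apery_quot a b t i * m + (i mod t + i div t * t)"
    unfolding apery_quot_def by (simp add: algebra_simps)
  also have "\<dots> = apery_quot a b t i * m + i" by simp
  finally have gens: "i mod t * (a * m + 1) + i div t * (b * m + t) = apery_quot a b t i * m + i" .
  have "(c - apery_quot a b t i) * m + apery_quot a b t i * m = c * m"
    using le by (metis add_mult_distrib le_add_diff_inverse2)
  then have "c * m + i = (c - apery_quot a b t i) * m + i mod t * (a * m + 1) + i div t * (b * m + t)"
    using gens by linarith
  then show "c * m + i \<in> gen_monoid {m, a * m + 1, b * m + t}"
    unfolding gen_monoid_three_iff by blast
qed

lemma apery_quot_complement:
  assumes "t dvd m" and "0 < m" and "i < m"
  shows "apery_quot a b t i + apery_quot a b t (m - 1 - i) = apery_quot a b t (m - 1)"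
proof -
  obtain K where m: "m = K * t" using assms(1) by (metis dvd_def mult.commute)
  have "0 < t" using assms(2) m by (cases t) auto
  define q r where "q = i div t" and "r = i mod t"
  have i: "i = q * t + r" and "r < t" unfolding q_def r_def using \<open>0 < t\<close> by simp_all
  have "q * t < K * t" using i assms(3) m by linarith
  then obtain d where K: "K = Suc (q + d)" using less_imp_Suc_add by auto
  obtain e where t: "t = Suc (r + e)" using less_imp_Suc_add[OF \<open>r < t\<close>] by auto
  have "m - 1 = (q + d) * t + (r + e)" and "m - 1 - i = d * t + e"
    using m K t i by (simp_all add: algebra_simps)
  moreover have "e < t" and "r + e < t" using t by simp_all
  ultimately have "apery_quot a b t (m - 1) = (r + e) * a + (q + d) * b"
    and "apery_quot a b t (m - 1 - i) = e * a + d * b"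
    and "apery_quot a b t i = r * a + q * b"
    using i \<open>r < t\<close> by (simp_all only: apery_quot_eq)
  then show ?thesis by (simp add: algebra_simps)
qed

lemma apery_quot_add_less:
  assumes "0 < q" and "0 < j" and "j < t" and "b < t * a"
  shows "apery_quot a b t (q * t - 1 + j) < apery_quot a b t (q * t - 1) + apery_quot a b t j"
proof -
  obtain q' where q: "q = Suc q'" using assms(1) by (cases q) auto
  obtain t' where t: "t = Suc t'" using assms(3) by (cases t) auto
  obtain j' where j: "j = Suc j'" using assms(2) by (cases j) auto
  have "q * t - 1 = q' * t + t'" and "q * t - 1 + j = q * t + j'"
    using q t j by simp_all
  moreover have "t' < t" and "j' < t" using t j assms(3) by simp_all
  ultimately have "apery_quot a b t (q * t - 1) = t' * a + q' * b"
    and "apery_quot a b t (q * t - 1 + j) = j' * a + q * b"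
    by (simp_all only: apery_quot_eq)
  moreover have "apery_quot a b t j = j * a"
    using assms(3) unfolding apery_quot_def by simp
  ultimately show ?thesis using assms(4) q t j by (simp add: algebra_simps)
qed

lemma mans3_coeff_bounds:
  fixes m a b t :: nat
  assumes "0 < m" and "(t - 1) * (a * m + 1) < b * m + t" and "b * m + t < t * (a * m + 1)"
  shows "(t - 1) * a \<le> b" and "b < t * a"
proof -
  have "(t - 1) * (a * m + 1) = (t - 1) * a * m + (t - 1)"
    by (simp add: add_mult_distrib2 mult.assoc)
  then have "(t - 1) * a * m < b * m + 1" using assms(2) by linarith
  then have "(t - 1) * a * m \<le> b * m" by linarith
  then show "(t - 1) * a \<le> b" using assms(1) by simp
  have "b * m < t * a * m" using assms(3) by (simp add: algebra_simps)
  then show "b < t * a" by simp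
qed

locale mans3_semigroup =
  fixes m a b t :: nat
  assumes t_pos: "0 < t" and t_less: "t < m"
    and b_ge: "(t - 1) * a \<le> b" and b_less: "b < t * a"
begin

sublocale apery_coordinates "gen_monoid {m, a * m + 1, b * m + t}" m "apery_quot a b t"
proof
  show "0 < m" using t_less by simp
  show "0 \<in> gen_monoid {m, a * m + 1, b * m + t}" by (rule gen_monoid.zero)
  show "c * m + i \<in> gen_monoid {m, a * m + 1, b * m + t} \<longleftrightarrow> apery_quot a b t i \<le> c"
    if "i < m" for i c
    using gen_monoid_mem_iff_apery_quot[OF t_pos b_ge less_imp_le[OF b_less] that] .
qed

lemma pf_residue_iff:
  "i < m \<Longrightarrow> pf_residue i \<longleftrightarrow>
    (\<forall>j. 0 < j \<longrightarrow> i + j < m \<longrightarrow> apery_quot a b t (i + j) < apery_quot a b t i + apery_quot a b t j)"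
  by (rule pf_residue_iff_mono[OF mono_imp_mono_on[OF mono_apery_quot[OF b_ge]]])

lemma pf_residue_last: "pf_residue (m - 1)"
proof -
  have last: "m - 1 < m" using m_pos by simp
  show ?thesis unfolding pf_residue_iff[OF last] by (intro allI impI) linarith
qed

lemma pf_residue_below_multiple: "pf_residue (m div t * t - 1)"
proof -
  have q: "0 < m div t" using t_less t_pos by (simp add: div_greater_zero_iff)
  have "m div t * t \<le> m" by simp
  then have i: "m div t * t - 1 < m" using t_less by arith
  have "j < t" if "m div t * t - 1 + j < m" for j
  proof -
    have "0 < m div t * t" using q t_pos by simp
    then have "m div t * t + j \<le> m" using that by linarith
    then have "j \<le> m mod t" using div_mult_mod_eq[of m t] by linarith
    then show ?thesis using mod_less_divisor[OF t_pos, of m] by linarith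
  qed
  then show ?thesis unfolding pf_residue_iff[OF i]
    using apery_quot_add_less[OF q _ _ b_less] by blast
qed

lemma pf_residues_of_dvd:
  assumes "t dvd m"
  shows "{i. i < m \<and> pf_residue i} = {m - 1}"
proof -
  have "i = m - 1" if i: "i < m" and residue: "pf_residue i" for i
  proof (rule ccontr)
    assume "i \<noteq> m - 1"
    then have j: "0 < m - 1 - i" and sum: "i + (m - 1 - i) = m - 1" using i by simp_all
    then have "i + (m - 1 - i) < m" using m_pos by simp
    then have "apery_quot a b t (i + (m - 1 - i)) < apery_quot a b t i + apery_quot a b t (m - 1 - i)"
      using residue j unfolding pf_residue_iff[OF i] by blast
    then show False using apery_quot_complement[OF assms m_pos i] sum by simp
  qed
  then show ?thesis using pf_residue_last m_pos by auto
qed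

lemma two_le_card_pf_residues:
  assumes "\<not> t dvd m"
  shows "2 \<le> card {i. i < m \<and> pf_residue i}"
proof -
  have "0 < m div t * t" using t_less t_pos by (simp add: div_greater_zero_iff)
  moreover have "m div t * t \<noteq> m" using assms by (metis dvd_triv_right)
  moreover have "m div t * t \<le> m" by simp
  ultimately have "m div t * t - 1 < m - 1" by arith
  then have two: "card {m div t * t - 1, m - 1} = 2"
    and sub: "{m div t * t - 1, m - 1} \<subseteq> {i. i < m \<and> pf_residue i}"
    using pf_residue_last pf_residue_below_multiple by auto
  have "finite {i. i < m \<and> pf_residue i}" by (rule finite_subset[of _ "{..<m}"]) auto
  from card_mono[OF this sub] show ?thesis unfolding two .
qed

end

theorem proposition3p21:
  fixes m a b t :: nat
  assumes "m \<ge> 3" and "a \<ge> 1" and "2 \<le> t" and "t \<le> m - 1"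
    and "(t - 1) * (a * m + 1) < b * m + t" and "b * m + t < t * (a * m + 1)"
  shows "semigroup_type (gen_monoid {m, a * m + 1, b * m + t}) = 1 \<longleftrightarrow> t dvd m"
proof -
  have "0 < m" using assms(1) by simp
  note coeff_bounds = mans3_coeff_bounds[OF this assms(5,6)]
  interpret mans3_semigroup m a b t
    using assms(1,3,4) coeff_bounds by unfold_locales auto
  show ?thesis
  proof
    assume "semigroup_type (gen_monoid {m, a * m + 1, b * m + t}) = 1"
    then show "t dvd m"
      unfolding semigroup_type_eq by (cases "t dvd m") (auto dest: two_le_card_pf_residues)
  next
    assume "t dvd m"
    then show "semigroup_type (gen_monoid {m, a * m + 1, b * m + t}) = 1"
      unfolding semigroup_type_eq by (simp add: pf_residues_of_dvd)
  qed
qed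

end
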